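(* Let $\sigma>0$ and let $f(z)=\sum_{k=0}^\infty f_kz^k$ with $|f_k|\le(k+2)^{-1-\sigma}$ for all $k\ge0$. Let $g(z)=\exp\left(\int_0^zf(\zeta)\,d\zeta\right)=1+\sum_{k=1}^\infty g_kz^k$. Then $|g_1|\le2^{-1-\sigma}$ and $|g_k|<(k+1)^{-1-\sigma}$ for $k=2,3,\dots$. *)

theory Defs
  imports Complex_Main "HOL-Computational_Algebra.Formal_Power_Series"
begin

definition exp_integral_fps :: "complex fps \<Rightarrow> complex fps" where
  "exp_integral_fps f = fps_exp 1 oo fps_integral0 f"

end

theory Submission
  imports Defs
begin

text \<open>Since g' = f g, the coefficients satisfy (n + 1) g(n+1) = sum over i \<le> n of f(i) g(n-i).
  With a = 1 + \<sigma>, induction gives |g(j)| \<le> (j + 1) powr -a, because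
  (i + 2)(n - i + 1) = (n + 2) + (i + 1)(n - i) \<ge> n + 2, so each of the n + 1 terms is at most
  (n + 2) powr -a. For n \<ge> 1 the term i = 0 is strictly smaller, which gives the strict
  bound from k = 2 on.\<close>

unbundle fps_syntax

lemma exp_integral_fps_nth_0 [simp]: "exp_integral_fps f $ 0 = 1"
  by (simp add: exp_integral_fps_def)

lemma fps_deriv_exp_integral_fps:
  fixes f :: "complex fps"
  shows "fps_deriv (exp_integral_fps f) = exp_integral_fps f * f"
proof -
  have "fps_deriv (exp_integral_fps f) =
      (fps_deriv (fps_exp 1) oo fps_integral0 f) * fps_deriv (fps_integral0 f)"
    unfolding exp_integral_fps_def by (rule fps_compose_deriv) simp
  then show ?thesis
    by (simp add: exp_integral_fps_def fps_deriv_fps_integral)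
qed

lemma exp_integral_fps_nth_Suc:
  fixes f :: "complex fps"
  shows "of_nat (Suc n) * exp_integral_fps f $ Suc n =
    (\<Sum>i=0..n. f $ i * exp_integral_fps f $ (n - i))"
proof -
  have "fps_deriv (exp_integral_fps f) $ n = (f * exp_integral_fps f) $ n"
    by (simp add: fps_deriv_exp_integral_fps mult.commute)
  then show ?thesis
    by (simp add: fps_mult_nth)
qed

lemma norm_convolution_le:
  fixes f g :: "nat \<Rightarrow> 'a :: real_normed_algebra"
  assumes "\<And>i. i \<le> n \<Longrightarrow> norm (f i) \<le> u i"
    and "\<And>j. j \<le> n \<Longrightarrow> norm (g j) \<le> v j"
  shows "norm (\<Sum>i=0..n. f i * g (n - i)) \<le> (\<Sum>i=0..n. u i * v (n - i))"
proof -
  have "norm (\<Sum>i=0..n. f i * g (n - i)) \<le> (\<Sum>i=0..n. norm (f i) * norm (g (n - i)))"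
    by (rule order_trans[OF norm_sum sum_mono]) (rule norm_mult_ineq)
  also have "\<dots> \<le> (\<Sum>i=0..n. u i * v (n - i))"
    by (intro sum_mono mult_mono) (auto intro: assms order_trans[OF norm_ge_zero])
  finally show ?thesis .
qed

lemma weight_product_eq:
  assumes "i \<le> n"
  shows "(real i + 2) * (real (n - i) + 1) = (real n + 2) + (real i + 1) * real (n - i)"
  using assms by (simp add: of_nat_diff algebra_simps)

lemma weight_product_powr_le:
  fixes a :: real
  assumes "a \<ge> 0" and "i \<le> n"
  shows "(real i + 2) powr (-a) * (real (n - i) + 1) powr (-a) \<le> (real n + 2) powr (-a)"
proof -
  have "real n + 2 \<le> (real i + 2) * (real (n - i) + 1)"
    using weight_product_eq[OF \<open>i \<le> n\<close>] by simp
  then show ?thesis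
    using \<open>a \<ge> 0\<close> by (simp add: powr_mult[symmetric] powr_mono2')
qed

lemma weight_product_powr_less:
  fixes a :: real
  assumes "a > 0" and "i < n"
  shows "(real i + 2) powr (-a) * (real (n - i) + 1) powr (-a) < (real n + 2) powr (-a)"
proof -
  have "real n + 2 < (real i + 2) * (real (n - i) + 1)"
    using weight_product_eq[of i n] \<open>i < n\<close> by simp
  then show ?thesis
    using \<open>a > 0\<close> by (simp add: powr_mult[symmetric] powr_less_mono2_neg)
qed

lemma weight_convolution_le:
  fixes a :: real
  assumes "a \<ge> 0"
  shows "(\<Sum>i=0..n. (real i + 2) powr (-a) * (real (n - i) + 1) powr (-a))
    \<le> (real n + 1) * (real n + 2) powr (-a)"
proof -
  have "(\<Sum>i=0..n. (real i + 2) powr (-a) * (real (n - i) + 1) powr (-a))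
      \<le> (\<Sum>i=0..n. (real n + 2) powr (-a))"
    using assms by (intro sum_mono weight_product_powr_le) auto
  then show ?thesis by (simp add: add.commute)
qed

lemma weight_convolution_less:
  fixes a :: real
  assumes "a > 0" and "n \<ge> 1"
  shows "(\<Sum>i=0..n. (real i + 2) powr (-a) * (real (n - i) + 1) powr (-a))
    < (real n + 1) * (real n + 2) powr (-a)"
proof -
  have "(\<Sum>i=0..n. (real i + 2) powr (-a) * (real (n - i) + 1) powr (-a))
      < (\<Sum>i=0..n. (real n + 2) powr (-a))"
  proof (rule sum_strict_mono_ex1)
    show "\<forall>i\<in>{0..n}. (real i + 2) powr (-a) * (real (n - i) + 1) powr (-a) \<le> (real n + 2) powr (-a)"
      using assms by (intro ballI weight_product_powr_le) auto
    show "\<exists>i\<in>{0..n}. (real i + 2) powr (-a) * (real (n - i) + 1) powr (-a) < (real n + 2) powr (-a)"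
      using assms weight_product_powr_less[of a 0 n] by (intro bexI[of _ 0]) auto
  qed simp
  then show ?thesis by (simp add: add.commute)
qed

lemma norm_exp_integral_fps_nth_Suc:
  fixes f :: "complex fps"
  shows "(real n + 1) * norm (exp_integral_fps f $ Suc n) =
    norm (\<Sum>i=0..n. f $ i * exp_integral_fps f $ (n - i))"
proof -
  have "(real n + 1) * norm (exp_integral_fps f $ Suc n) =
      norm (of_nat (Suc n) * exp_integral_fps f $ Suc n)"
    by (simp only: norm_mult norm_of_nat) simp
  then show ?thesis
    by (simp only: exp_integral_fps_nth_Suc)
qed

lemma norm_exp_integral_fps_nth_Suc_le:
  fixes f :: "complex fps" and a :: real
  assumes "\<And>i. i \<le> n \<Longrightarrow> norm (f $ i) \<le> (real i + 2) powr (-a)"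
    and "\<And>j. j \<le> n \<Longrightarrow> norm (exp_integral_fps f $ j) \<le> (real j + 1) powr (-a)"
  shows "(real n + 1) * norm (exp_integral_fps f $ Suc n)
    \<le> (\<Sum>i=0..n. (real i + 2) powr (-a) * (real (n - i) + 1) powr (-a))"
  unfolding norm_exp_integral_fps_nth_Suc using assms by (rule norm_convolution_le)

lemma norm_exp_integral_fps_nth_le:
  fixes f :: "complex fps" and a :: real
  assumes "a \<ge> 0" and "\<And>i. norm (f $ i) \<le> (real i + 2) powr (-a)"
  shows "norm (exp_integral_fps f $ k) \<le> (real k + 1) powr (-a)"
proof (induction k rule: less_induct)
  case (less k)
  show ?case
  proof (cases k)
    case (Suc n)
    have "(real n + 1) * norm (exp_integral_fps f $ Suc n)
        \<le> (\<Sum>i=0..n. (real i + 2) powr (-a) * (real (n - i) + 1) powr (-a))"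
      using assms(2) less Suc by (intro norm_exp_integral_fps_nth_Suc_le) auto
    also have "\<dots> \<le> (real n + 1) * (real n + 2) powr (-a)"
      using \<open>a \<ge> 0\<close> by (rule weight_convolution_le)
    finally show ?thesis
      using Suc by (simp add: add.commute)
  qed simp
qed

lemma norm_exp_integral_fps_nth_less:
  fixes f :: "complex fps" and a :: real
  assumes "a > 0" and "\<And>i. norm (f $ i) \<le> (real i + 2) powr (-a)" and "k \<ge> 2"
  shows "norm (exp_integral_fps f $ k) < (real k + 1) powr (-a)"
proof -
  obtain n where k: "k = Suc n" and "n \<ge> 1"
    using \<open>k \<ge> 2\<close> by (cases k) auto
  have "(real n + 1) * norm (exp_integral_fps f $ Suc n)
      \<le> (\<Sum>i=0..n. (real i + 2) powr (-a) * (real (n - i) + 1) powr (-a))"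
    using assms norm_exp_integral_fps_nth_le[of a f] by (intro norm_exp_integral_fps_nth_Suc_le) auto
  also have "\<dots> < (real n + 1) * (real n + 2) powr (-a)"
    using \<open>a > 0\<close> \<open>n \<ge> 1\<close> by (rule weight_convolution_less)
  finally show ?thesis
    using k by (simp add: add.commute)
qed

theorem lemma3p2:
  fixes \<sigma> :: real and fc :: "nat \<Rightarrow> complex"
  assumes "\<sigma> > 0"
    and "\<And>k. norm (fc k) \<le> (real k + 2) powr (-1 - \<sigma>)"
  shows "norm (fps_nth (exp_integral_fps (Abs_fps fc)) 1) \<le> 2 powr (-1 - \<sigma>) \<and>
         (\<forall>k\<ge>2. norm (fps_nth (exp_integral_fps (Abs_fps fc)) k) < (real k + 1) powr (-1 - \<sigma>))"
proof -
  define a where "a = 1 + \<sigma>"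
  have "a > 0" and exponent: "-1 - \<sigma> = -a"
    using assms(1) by (simp_all add: a_def)
  have f: "norm (Abs_fps fc $ i) \<le> (real i + 2) powr (-a)" for i
    using assms(2) by (simp add: exponent)
  show ?thesis
    unfolding exponent
    using norm_exp_integral_fps_nth_le[OF less_imp_le[OF \<open>a > 0\<close>] f, of 1]
      norm_exp_integral_fps_nth_less[OF \<open>a > 0\<close> f]
    by simp
qed

end
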